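(* Let $\Theta=\{1,2\}$, let $(A,u)$ be a decision problem and let $P_1,\dots,P_m$ be experiments. Then $V(P_1,\dots,P_m;(A,u))=V(\overline P;(A,u))$, where $\overline P$ is a Blackwell supremum of $P_1,\dots,P_m$.
   Context: $\Theta$ is a finite set of states. A decision problem is a pair $(A,u)$ with $A$ a finite nonempty action set and $u:\Theta\times A\to\mathbb{R}$; for $\alpha\in\Delta(A)$ write $u(\theta,\alpha)=\sum_a\alpha(a)u(\theta,a)$. An experiment is a map $P:\Theta\to\Delta(Y)$ with $Y$ a finite signal set. Given experiments $P_j:\Theta\to\Delta(Y_j)$, $j=1,\dots,m$, let $\mathbf Y=Y_1\times\cdots\times Y_m$ and let $\mathcal P(P_1,\dots,P_m)$ be the set of experiments $P:\Theta\to\Delta(\mathbf Y)$ whose $j$-th marginal is $P_j(\cdot|\theta)$ for every $\theta$ and $j$. A strategy is a map $\sigma:\mathbf Y\to\Delta(A)$. Define $V(P_1,\dots,P_m;(A,u))=\max_{\sigma}\min_{P\in\mathcal P(P_1,\dots,P_m)}\sum_{\theta}\sum_{\mathbf y\in\mathbf Y}P(\mathbf y|\theta)u(\theta,\sigma(\mathbf y))$; for $m=1$ this is the usual value $V(P;(A,u))=\max_{\sigma:Y\to\Delta(A)}\sum_\theta\sum_y P(y|\theta)u(\theta,\sigma(y))$. An experiment $P$ is more informative than $Q$ if $V(P;(A,u))\ge V(Q;(A,u))$ for every decision problem. $R$ is a Blackwell supremum of $P_1,\dots,P_m$ if $R$ is more informative than each $P_j$ and every $S$ more informative than all $P_j$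 is more informative than $R$ (such a supremum exists when $|\Theta|=2$). *)

theory Defs
  imports Complex_Main "HOL-Library.FuncSet"
begin

text \<open>States form a finite type 's (Theta = UNIV). A probability distribution on a
finite set Y is given by a real weight function, nonnegative on Y and summing to 1 over Y.\<close>

definition is_dist :: "'y set \<Rightarrow> ('y \<Rightarrow> real) \<Rightarrow> bool" where
  "is_dist Y p \<longleftrightarrow> (\<forall>y\<in>Y. 0 \<le> p y) \<and> sum p Y = 1"

definition is_experiment :: "'y set \<Rightarrow> ('s \<Rightarrow> 'y \<Rightarrow> real) \<Rightarrow> bool" where
  "is_experiment Y P \<longleftrightarrow> finite Y \<and> (\<forall>\<theta>. is_dist Y (P \<theta>))"

definition strategies :: "'y set \<Rightarrow> 'a set \<Rightarrow> ('y \<Rightarrow> 'a \<Rightarrow> real) set" where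
  "strategies Y A = {\<sigma>. \<forall>y\<in>Y. is_dist A (\<sigma> y)}"

definition mixed_util :: "'a set \<Rightarrow> ('s \<Rightarrow> 'a \<Rightarrow> real) \<Rightarrow> 's \<Rightarrow> ('a \<Rightarrow> real) \<Rightarrow> real" where
  "mixed_util A u \<theta> \<alpha> = (\<Sum>a\<in>A. \<alpha> a * u \<theta> a)"

definition payoff :: "'y set \<Rightarrow> ('s::finite \<Rightarrow> 'y \<Rightarrow> real) \<Rightarrow> 'a set \<Rightarrow> ('s \<Rightarrow> 'a \<Rightarrow> real)
                      \<Rightarrow> ('y \<Rightarrow> 'a \<Rightarrow> real) \<Rightarrow> real" where
  "payoff Y P A u \<sigma> = (\<Sum>\<theta>\<in>UNIV. \<Sum>y\<in>Y. P \<theta> y * mixed_util A u \<theta> (\<sigma> y))"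

text \<open>Single-experiment value V(P;(A,u)) (the maximum is attained; written as a supremum).\<close>
definition value1 :: "'y set \<Rightarrow> ('s::finite \<Rightarrow> 'y \<Rightarrow> real) \<Rightarrow> 'a set \<Rightarrow> ('s \<Rightarrow> 'a \<Rightarrow> real) \<Rightarrow> real" where
  "value1 Y P A u = (SUP \<sigma>\<in>strategies Y A. payoff Y P A u \<sigma>)"

text \<open>Experiments P_1..P_m are indexed by j < m (i.e. j = 0..m-1), with signal sets Y j.
Joint signal set: the product PiE {..<m} Y.  Couplings: joint experiments whose
j-th marginal is P j.\<close>
definition couplings :: "nat \<Rightarrow> (nat \<Rightarrow> 'y set) \<Rightarrow> (nat \<Rightarrow> 's \<Rightarrow> 'y \<Rightarrow> real)
                         \<Rightarrow> ('s \<Rightarrow> (nat \<Rightarrow> 'y) \<Rightarrow> real) set" where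
  "couplings m Y P = {Q. (\<forall>\<theta>. is_dist (PiE {..<m} Y) (Q \<theta>)) \<and>
      (\<forall>\<theta>. \<forall>j<m. \<forall>y\<in>Y j. (\<Sum>ys\<in>{ys\<in>PiE {..<m} Y. ys j = y}. Q \<theta> ys) = P j \<theta> y)}"

definition valueM :: "nat \<Rightarrow> (nat \<Rightarrow> 'y set) \<Rightarrow> (nat \<Rightarrow> 's::finite \<Rightarrow> 'y \<Rightarrow> real)
                      \<Rightarrow> 'a set \<Rightarrow> ('s \<Rightarrow> 'a \<Rightarrow> real) \<Rightarrow> real" where
  "valueM m Y P A u = (SUP \<sigma>\<in>strategies (PiE {..<m} Y) A.
       INF Q\<in>couplings m Y P. payoff (PiE {..<m} Y) Q A u \<sigma>)"

text \<open>P more informative than Q: weakly higher value in every decision problem.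
Finite action sets are taken inside nat (every finite set embeds there).\<close>
definition more_informative :: "'y set \<Rightarrow> ('s::finite \<Rightarrow> 'y \<Rightarrow> real) \<Rightarrow> 'z set \<Rightarrow> ('s \<Rightarrow> 'z \<Rightarrow> real) \<Rightarrow> bool" where
  "more_informative Y P Z Q \<longleftrightarrow>
     (\<forall>(A::nat set) u. finite A \<and> A \<noteq> {} \<longrightarrow> value1 Y P A u \<ge> value1 Z Q A u)"

text \<open>Blackwell supremum; competing experiments S range over finite signal sets in nat
(every finite signal set embeds there).\<close>
definition blackwell_sup :: "nat \<Rightarrow> (nat \<Rightarrow> 'y set) \<Rightarrow> (nat \<Rightarrow> 's::finite \<Rightarrow> 'y \<Rightarrow> real)
                             \<Rightarrow> 'z set \<Rightarrow> ('s \<Rightarrow> 'z \<Rightarrow> real) \<Rightarrow> bool" where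
  "blackwell_sup m Y P Z R \<longleftrightarrow> is_experiment Z R \<and>
     (\<forall>j<m. more_informative Z R (Y j) (P j)) \<and>
     (\<forall>(W::nat set) S. is_experiment W S \<and> (\<forall>j<m. more_informative W S (Y j) (P j))
          \<longrightarrow> more_informative W S Z R)"

end

theory Submission
  imports Defs "HOL-Analysis.Analysis"
begin

text \<open>By Blackwell's theorem the supremum R is a garbling of every P j. Drawing the signals of
  the P j independently given the signal of R couples them into a joint experiment that is itself
  a garbling of R, so against this coupling no strategy earns more than V(R). Conversely, every
  coupling is more informative than each P j and hence than R, so it admits a response worth
  V(R). Payoffs are affine in the coupling and the couplings form a compact convex set, so a
  minimax argument over the finitely many pure strategies, via a theorem of the alternative,
  yields a single strategy worth almost V(R) against all couplings.\<close>

section \<open>A theorem of the alternative\<close>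

lemma continuous_on_coordinate2 [continuous_intros]:
  "continuous_on S (\<lambda>Q::'a \<Rightarrow> 'b \<Rightarrow> real. Q a b)"
proof -
  have "continuous_on UNIV (\<lambda>Q::'a \<Rightarrow> 'b \<Rightarrow> real. Q a)" by simp
  then have "continuous_on UNIV (\<lambda>Q::'a \<Rightarrow> 'b \<Rightarrow> real. Q a b)"
    by (rule continuous_on_product_then_coordinatewise)
  then show ?thesis using continuous_on_subset by blast
qed

lemma compact_box2:
  assumes "\<And>a b. compact (B a b :: real set)"
  shows "compact {Q::'a \<Rightarrow> 'b \<Rightarrow> real. \<forall>a b. Q a b \<in> B a b}"
proof -
  have "{Q::'a \<Rightarrow> 'b \<Rightarrow> real. \<forall>a b. Q a b \<in> B a b} = PiE UNIV (\<lambda>a. PiE UNIV (B a))"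
    by (auto simp: PiE_iff)
  moreover have "compact (PiE UNIV (B a))" for a
    using assms compactin_PiE[of "\<lambda>_. euclidean" UNIV "B a"]
    by (simp add: euclidean_product_topology)
  then have "compact (PiE UNIV (\<lambda>a. PiE UNIV (B a)))"
    using compactin_PiE[of "\<lambda>_. euclidean" UNIV "\<lambda>a. PiE UNIV (B a)"]
    by (simp add: euclidean_product_topology)
  ultimately show ?thesis by simp
qed

lemma sq_max0_add_le: "(max 0 (a + b::real))\<^sup>2 \<le> (max 0 a + b)\<^sup>2"
  by (cases "a \<ge> 0"; cases "a + b \<ge> 0") (auto simp: max_def intro!: power_mono)

text \<open>The vector max 0 a is half the gradient of the sum of squared positive parts at a, so
  the hypothesis says that b - a is a descent direction.\<close>

lemma sum_sq_max0_decrease: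
  fixes a b :: "'k \<Rightarrow> real"
  assumes "finite K"
    and less: "(\<Sum>k\<in>K. max 0 (a k) * b k) < (\<Sum>k\<in>K. (max 0 (a k))\<^sup>2)"
  obtains t where "0 < t" "t \<le> 1"
    "(\<Sum>k\<in>K. (max 0 ((1 - t) * a k + t * b k))\<^sup>2) < (\<Sum>k\<in>K. (max 0 (a k))\<^sup>2)"
proof -
  define d where "d k = max 0 (a k)" for k
  define \<delta> where "\<delta> k = b k - a k" for k
  define e where "e = - (\<Sum>k\<in>K. d k * \<delta> k)"
  define S where "S = (\<Sum>k\<in>K. (\<delta> k)\<^sup>2)"
  define t where "t = min 1 (e / (S + 1))"
  have "d k * a k = (d k)\<^sup>2" for k
    by (auto simp: d_def max_def power2_eq_square)
  then have "e = (\<Sum>k\<in>K. (d k)\<^sup>2) - (\<Sum>k\<in>K. d k * b k)"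
    by (simp add: e_def \<delta>_def right_diff_distrib sum_subtractf)
  then have e: "e > 0" using less by (simp add: d_def)
  have S: "S \<ge> 0" unfolding S_def by (intro sum_nonneg) auto
  have t: "0 < t" "t \<le> 1" using e S by (auto simp: t_def)
  have "t \<le> e / (S + 1)" by (simp add: t_def)
  then have "t * (S + 1) \<le> e" using S by (simp add: le_divide_eq)
  moreover have "t * S \<le> t * (S + 1)" using t by (simp add: algebra_simps)
  ultimately have "t * S \<le> e" by linarith
  then have small: "t * (t * S) \<le> t * e" using t by (intro mult_left_mono) auto
  have "(\<Sum>k\<in>K. (max 0 ((1 - t) * a k + t * b k))\<^sup>2) \<le> (\<Sum>k\<in>K. (d k + t * \<delta> k)\<^sup>2)"
  proof (intro sum_mono)
    fix k
    have "(1 - t) * a k + t * b k = a k + t * \<delta> k" by (simp add: \<delta>_def algebra_simps)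
    then show "(max 0 ((1 - t) * a k + t * b k))\<^sup>2 \<le> (d k + t * \<delta> k)\<^sup>2"
      by (simp add: d_def sq_max0_add_le)
  qed
  also have "\<dots> = (\<Sum>k\<in>K. (d k)\<^sup>2 + 2 * t * (d k * \<delta> k) + t * (t * (\<delta> k)\<^sup>2))"
    by (intro sum.cong refl) (simp add: power2_eq_square algebra_simps)
  also have "\<dots> = (\<Sum>k\<in>K. (d k)\<^sup>2) - 2 * t * e + t * (t * S)"
    by (simp add: e_def S_def sum.distrib sum_distrib_left)
  also have "\<dots> < (\<Sum>k\<in>K. (d k)\<^sup>2)"
    using small mult_pos_pos[OF t(1) e] by linarith
  finally show ?thesis using that t by (simp add: d_def)
qed

text \<open>The space carrying X need not be a vector space: mix t x y plays the role of the convex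
  combination (1 - t) x + t y. The weights are the normalised gradient, at a minimiser over X, of the sum
  of squared positive parts of the F k.\<close>

lemma affine_functions_alternative:
  fixes X :: "'x::topological_space set" and F :: "'k \<Rightarrow> 'x \<Rightarrow> real"
  assumes "compact X" "X \<noteq> {}" "finite K"
    and cont: "\<And>k. k \<in> K \<Longrightarrow> continuous_on X (F k)"
    and mix_in: "\<And>t x y. 0 \<le> t \<Longrightarrow> t \<le> 1 \<Longrightarrow> x \<in> X \<Longrightarrow> y \<in> X \<Longrightarrow> mix t x y \<in> X"
    and affine: "\<And>t x y k. 0 \<le> t \<Longrightarrow> t \<le> 1 \<Longrightarrow> x \<in> X \<Longrightarrow> y \<in> X \<Longrightarrow> k \<in> K \<Longrightarrow>
                   F k (mix t x y) = (1 - t) * F k x + t * F k y"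
  shows "(\<exists>x\<in>X. \<forall>k\<in>K. F k x \<le> 0) \<or>
         (\<exists>l. (\<forall>k\<in>K. 0 \<le> l k) \<and> sum l K = 1 \<and> (\<forall>x\<in>X. 0 < (\<Sum>k\<in>K. l k * F k x)))"
proof -
  define h where "h x = (\<Sum>k\<in>K. (max 0 (F k x))\<^sup>2)" for x
  have "continuous_on X h"
    unfolding h_def by (intro continuous_intros cont)
  then obtain x0 where x0: "x0 \<in> X" and min: "\<And>x. x \<in> X \<Longrightarrow> h x0 \<le> h x"
    using continuous_attains_inf[OF \<open>compact X\<close> \<open>X \<noteq> {}\<close>] by blast
  show ?thesis
  proof (cases "\<forall>k\<in>K. F k x0 \<le> 0")
    case True
    then show ?thesis using x0 by blast
  next
    case False
    then obtain k0 where k0: "k0 \<in> K" "F k0 x0 > 0" by force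
    define d where "d k = max 0 (F k x0)" for k
    define D where "D = sum d K"
    have d: "d k \<ge> 0" for k by (simp add: d_def)
    have "d k0 \<le> D"
      unfolding D_def using k0 \<open>finite K\<close> d by (intro member_le_sum) auto
    then have D: "D > 0" using k0 by (simp add: d_def)
    have pos: "0 < (\<Sum>k\<in>K. d k * F k x)" if x: "x \<in> X" for x
    proof (rule ccontr)
      assume "\<not> 0 < (\<Sum>k\<in>K. d k * F k x)"
      moreover have "(d k0)\<^sup>2 \<le> (\<Sum>k\<in>K. (d k)\<^sup>2)"
        using k0 \<open>finite K\<close> by (intro member_le_sum) auto
      moreover have "0 < (d k0)\<^sup>2" using k0 by (simp add: d_def)
      ultimately have "(\<Sum>k\<in>K. d k * F k x) < (\<Sum>k\<in>K. (d k)\<^sup>2)" by linarith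
      then obtain t where t: "0 < t" "t \<le> 1"
        and "(\<Sum>k\<in>K. (max 0 ((1 - t) * F k x0 + t * F k x))\<^sup>2) < h x0"
        using sum_sq_max0_decrease[OF \<open>finite K\<close>, of "\<lambda>k. F k x0" "\<lambda>k. F k x"]
        unfolding d_def h_def by blast
      moreover have "h (mix t x0 x) = (\<Sum>k\<in>K. (max 0 ((1 - t) * F k x0 + t * F k x))\<^sup>2)"
        unfolding h_def using t x0 x by (intro sum.cong refl) (simp add: affine)
      ultimately show False using min[OF mix_in[OF _ t(2) x0 x]] t by linarith
    qed
    show ?thesis
    proof (intro disjI2 exI[of _ "\<lambda>k. d k / D"] conjI ballI)
      show "(\<Sum>k\<in>K. d k / D) = 1" using D by (simp add: D_def flip: sum_divide_distrib)
      fix x assume "x \<in> X"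
      then show "0 < (\<Sum>k\<in>K. d k / D * F k x)"
        using pos D by (simp add: sum_divide_distrib[symmetric])
    qed (use d D in simp)
  qed
qed

section \<open>Values of decision problems\<close>

definition signal_payoff :: "('s::finite \<Rightarrow> 'y \<Rightarrow> real) \<Rightarrow> ('s \<Rightarrow> 'a \<Rightarrow> real) \<Rightarrow> 'y \<Rightarrow> 'a \<Rightarrow> real"
  where "signal_payoff P u y a = (\<Sum>\<theta>\<in>UNIV. P \<theta> y * u \<theta> a)"

definition best_value :: "'y set \<Rightarrow> ('s::finite \<Rightarrow> 'y \<Rightarrow> real) \<Rightarrow> 'a set \<Rightarrow> ('s \<Rightarrow> 'a \<Rightarrow> real) \<Rightarrow> real"
  where "best_value Y P A u = (\<Sum>y\<in>Y. Max (signal_payoff P u y ` A))"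

definition pure_strategy :: "('y \<Rightarrow> 'a) \<Rightarrow> 'y \<Rightarrow> 'a \<Rightarrow> real"
  where "pure_strategy s y a = (if s y = a then 1 else 0)"

lemma payoff_eq_signal_payoff:
  "payoff Y P A u \<sigma> = (\<Sum>y\<in>Y. \<Sum>a\<in>A. \<sigma> y a * signal_payoff P u y a)"
proof -
  have "payoff Y P A u \<sigma> = (\<Sum>\<theta>\<in>UNIV. \<Sum>y\<in>Y. \<Sum>a\<in>A. \<sigma> y a * (P \<theta> y * u \<theta> a))"
    unfolding payoff_def mixed_util_def by (simp add: sum_distrib_left mult_ac)
  also have "\<dots> = (\<Sum>y\<in>Y. \<Sum>a\<in>A. \<Sum>\<theta>\<in>UNIV. \<sigma> y a * (P \<theta> y * u \<theta> a))"
    by (subst sum.swap) (intro sum.cong refl, rule sum.swap)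
  finally show ?thesis by (simp add: signal_payoff_def sum_distrib_left)
qed

lemma payoff_cong:
  "(\<And>\<theta> y. y \<in> Y \<Longrightarrow> P \<theta> y = P' \<theta> y) \<Longrightarrow> (\<And>y. y \<in> Y \<Longrightarrow> \<sigma> y = \<sigma>' y) \<Longrightarrow>
    payoff Y P A u \<sigma> = payoff Y P' A u \<sigma>'"
  unfolding payoff_def by simp

lemma is_dist_sum_le_Max:
  fixes c :: "'a \<Rightarrow> real"
  assumes "finite A" "is_dist A \<alpha>"
  shows "(\<Sum>a\<in>A. \<alpha> a * c a) \<le> Max (c ` A)"
proof -
  have "A \<noteq> {}" using assms(2) by (auto simp: is_dist_def)
  then have "(\<Sum>a\<in>A. \<alpha> a * c a) \<le> (\<Sum>a\<in>A. \<alpha> a * Max (c ` A))"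
    using assms by (intro sum_mono mult_left_mono) (auto simp: is_dist_def)
  also have "\<dots> = Max (c ` A)" using assms(2) by (simp add: is_dist_def flip: sum_distrib_right)
  finally show ?thesis .
qed

lemma payoff_le_best_value:
  assumes "finite A" "\<sigma> \<in> strategies Y A"
  shows "payoff Y P A u \<sigma> \<le> best_value Y P A u"
  unfolding payoff_eq_signal_payoff best_value_def
  using assms by (intro sum_mono is_dist_sum_le_Max) (auto simp: strategies_def)

lemma pure_strategy_in_strategies:
  "finite A \<Longrightarrow> (\<And>y. y \<in> Y \<Longrightarrow> s y \<in> A) \<Longrightarrow> pure_strategy s \<in> strategies Y A"
  by (auto simp: strategies_def is_dist_def pure_strategy_def)

lemma payoff_pure_strategy:
  assumes "finite A" "\<And>y. y \<in> Y \<Longrightarrow> s y \<in> A"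
  shows "payoff Y P A u (pure_strategy s) = (\<Sum>y\<in>Y. signal_payoff P u y (s y))"
  unfolding payoff_eq_signal_payoff
proof (intro sum.cong refl)
  fix y assume "y \<in> Y"
  have "(\<Sum>a\<in>A. pure_strategy s y a * signal_payoff P u y a)
      = (\<Sum>a\<in>A. if s y = a then signal_payoff P u y a else 0)"
    by (intro sum.cong refl) (simp add: pure_strategy_def)
  then show "(\<Sum>a\<in>A. pure_strategy s y a * signal_payoff P u y a) = signal_payoff P u y (s y)"
    using assms \<open>y \<in> Y\<close> by (simp add: sum.delta)
qed

lemma best_response_exists:
  assumes "finite A" "A \<noteq> {}"
  obtains s where "\<And>y. s y \<in> A" "\<And>y. signal_payoff P u y (s y) = Max (signal_payoff P u y ` A)"
proof -
  have "\<exists>a\<in>A. signal_payoff P u y a = Max (signal_payoff P u y ` A)" for y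
  proof -
    have "Max (signal_payoff P u y ` A) \<in> signal_payoff P u y ` A"
      using assms by (intro Max_in) auto
    then show ?thesis by force
  qed
  then show ?thesis using that by metis
qed

lemma payoff_best_response:
  assumes "finite A" "A \<noteq> {}"
  obtains s where "\<And>y. s y \<in> A" "payoff Y P A u (pure_strategy s) = best_value Y P A u"
proof -
  obtain s where "\<And>y. s y \<in> A" "\<And>y. signal_payoff P u y (s y) = Max (signal_payoff P u y ` A)"
    using best_response_exists[OF assms] by blast
  moreover from this assms have "payoff Y P A u (pure_strategy s) = best_value Y P A u"
    by (simp add: payoff_pure_strategy best_value_def)
  ultimately show ?thesis using that by blast
qed

lemma value1_eq_best_value:
  assumes "finite A" "A \<noteq> {}"
  shows "value1 Y P A u = best_value Y P A u"
proof -
  obtain s where s: "\<And>y. s y \<in> A" "payoff Y P A u (pure_strategy s) = best_value Y P A u"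
    using payoff_best_response[OF assms] by blast
  have "pure_strategy s \<in> strategies Y A"
    using s assms by (intro pure_strategy_in_strategies) auto
  moreover have "bdd_above (payoff Y P A u ` strategies Y A)"
    using payoff_le_best_value[OF assms(1)] by (intro bdd_aboveI) blast
  ultimately show ?thesis unfolding value1_def
    using s(2) payoff_le_best_value[OF assms(1)]
    by (intro antisym cSUP_least) (auto, metis cSUP_upper)
qed

lemma payoff_ge_neg_sum_abs:
  assumes "finite A" "\<sigma> \<in> strategies Y A" "\<And>\<theta>. is_dist Y (P \<theta>)"
  shows "- (\<Sum>\<theta>\<in>UNIV. \<Sum>a\<in>A. \<bar>u \<theta> a\<bar>) \<le> payoff Y P A u \<sigma>"
proof -
  have util: "- (\<Sum>a\<in>A. \<bar>u \<theta> a\<bar>) \<le> mixed_util A u \<theta> (\<sigma> y)" if "y \<in> Y" for \<theta> y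
    unfolding mixed_util_def sum_negf[symmetric]
  proof (intro sum_mono)
    fix a assume "a \<in> A"
    have dist: "is_dist A (\<sigma> y)" using assms(2) that by (simp add: strategies_def)
    then have "\<sigma> y a \<le> sum (\<sigma> y) A"
      using assms(1) \<open>a \<in> A\<close> by (intro member_le_sum) (auto simp: is_dist_def)
    then have "\<bar>\<sigma> y a * u \<theta> a\<bar> \<le> \<bar>u \<theta> a\<bar>"
      using dist \<open>a \<in> A\<close> by (simp add: is_dist_def abs_mult mult_left_le_one_le)
    then show "- \<bar>u \<theta> a\<bar> \<le> \<sigma> y a * u \<theta> a" by linarith
  qed
  have "- (\<Sum>\<theta>\<in>UNIV. \<Sum>a\<in>A. \<bar>u \<theta> a\<bar>) = (\<Sum>\<theta>\<in>UNIV. \<Sum>y\<in>Y. P \<theta> y * - (\<Sum>a\<in>A. \<bar>u \<theta> a\<bar>))"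
    using assms(3) by (simp add: is_dist_def sum_negf flip: sum_distrib_right)
  also have "\<dots> \<le> payoff Y P A u \<sigma>"
    unfolding payoff_def using assms(3) util
    by (intro sum_mono mult_left_mono) (auto simp: is_dist_def)
  finally show ?thesis .
qed

lemma strategy_mixture_in_strategies:
  assumes "\<And>s. s \<in> S \<Longrightarrow> \<sigma>s s \<in> strategies Y A"
    and "\<And>y s. y \<in> Y \<Longrightarrow> s \<in> S \<Longrightarrow> 0 \<le> l y s" "\<And>y. y \<in> Y \<Longrightarrow> sum (l y) S = 1"
  shows "(\<lambda>y a. \<Sum>s\<in>S. l y s * \<sigma>s s y a) \<in> strategies Y A"
  unfolding strategies_def is_dist_def
proof (intro CollectI ballI conjI)
  fix y assume "y \<in> Y"
  then have \<sigma>s: "is_dist A (\<sigma>s s y)" if "s \<in> S" for s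
    using assms(1) that by (simp add: strategies_def)
  show "0 \<le> (\<Sum>s\<in>S. l y s * \<sigma>s s y a)" if "a \<in> A" for a
    using \<sigma>s assms(2) \<open>y \<in> Y\<close> that by (intro sum_nonneg mult_nonneg_nonneg) (auto simp: is_dist_def)
  have "(\<Sum>a\<in>A. \<Sum>s\<in>S. l y s * \<sigma>s s y a) = (\<Sum>s\<in>S. l y s * sum (\<sigma>s s y) A)"
    by (subst sum.swap) (simp add: sum_distrib_left)
  also have "\<dots> = 1" using \<sigma>s assms(3) \<open>y \<in> Y\<close> by (simp add: is_dist_def)
  finally show "(\<Sum>a\<in>A. \<Sum>s\<in>S. l y s * \<sigma>s s y a) = 1" .
qed

lemma payoff_strategy_mixture:
  "payoff Y P A u (\<lambda>y a. \<Sum>s\<in>S. l s * \<sigma>s s y a) = (\<Sum>s\<in>S. l s * payoff Y P A u (\<sigma>s s))"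
proof -
  have "payoff Y P A u (\<lambda>y a. \<Sum>s\<in>S. l s * \<sigma>s s y a)
      = (\<Sum>y\<in>Y. \<Sum>a\<in>A. \<Sum>s\<in>S. l s * (\<sigma>s s y a * signal_payoff P u y a))"
    unfolding payoff_eq_signal_payoff by (simp add: sum_distrib_right mult.assoc)
  also have "\<dots> = (\<Sum>s\<in>S. \<Sum>y\<in>Y. \<Sum>a\<in>A. l s * (\<sigma>s s y a * signal_payoff P u y a))"
    by (subst sum.swap) (intro sum.cong refl, rule sum.swap)
  finally show ?thesis unfolding payoff_eq_signal_payoff by (simp add: sum_distrib_left)
qed

lemma best_value_relabel_actions:
  assumes "bij_betw g A' A"
  shows "best_value Y P A' (\<lambda>\<theta> n. u \<theta> (g n)) = best_value Y P A u"
proof -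
  have "signal_payoff P (\<lambda>\<theta> n. u \<theta> (g n)) y ` A' = signal_payoff P u y ` (g ` A')" for y
    by (auto simp: signal_payoff_def)
  then show ?thesis using assms by (simp add: best_value_def bij_betw_def)
qed

lemma best_value_relabel_signals:
  assumes "bij_betw f W Y"
  shows "best_value W (\<lambda>\<theta> n. P \<theta> (f n)) A u = best_value Y P A u"
  unfolding best_value_def signal_payoff_def using assms by (rule sum.reindex_bij_betw)

text \<open>more_informative and blackwell_sup only quantify over action and signal sets inside
  nat; relabelling transfers them to arbitrary finite sets.\<close>

lemma more_informative_best_value_le:
  fixes A :: "'a set"
  assumes "more_informative Z R Y P" "finite A" "A \<noteq> {}"
  shows "best_value Y P A u \<le> best_value Z R A u"
proof -
  obtain g where g: "bij_betw g {0..<card A} A"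
    using ex_bij_betw_nat_finite[OF assms(2)] by blast
  have "{0..<card A} \<noteq> {}" using assms(2,3) by auto
  then have "value1 Y P {0..<card A} (\<lambda>\<theta> n. u \<theta> (g n)) \<le> value1 Z R {0..<card A} (\<lambda>\<theta> n. u \<theta> (g n))"
    using assms(1) unfolding more_informative_def by blast
  then show ?thesis
    using \<open>{0..<card A} \<noteq> {}\<close> by (simp add: value1_eq_best_value best_value_relabel_actions[OF g])
qed

lemma blackwell_sup_best_value_le:
  fixes W :: "'w set" and A :: "'a set"
  assumes sup: "blackwell_sup m Y P Z R" and S: "is_experiment W S"
    and dominates: "\<And>j (B :: nat set) v. j < m \<Longrightarrow> finite B \<Longrightarrow> B \<noteq> {} \<Longrightarrow>
                      best_value (Y j) (P j) B v \<le> best_value W S B v"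
    and "finite A" "A \<noteq> {}"
  shows "best_value Z R A u \<le> best_value W S A u"
proof -
  obtain f where f: "bij_betw f {0..<card W} W"
    using S ex_bij_betw_nat_finite by (auto simp: is_experiment_def)
  define S' where "S' = (\<lambda>\<theta> n. S \<theta> (f n))"
  have "is_experiment {0..<card W} S'"
    using S f by (auto simp: is_experiment_def is_dist_def S'_def sum.reindex_bij_betw bij_betw_apply)
  moreover have "more_informative {0..<card W} S' (Y j) (P j)" if "j < m" for j
    unfolding more_informative_def
    using dominates[OF that] by (simp add: value1_eq_best_value S'_def best_value_relabel_signals[OF f])
  ultimately have "more_informative {0..<card W} S' Z R"
    using sup unfolding blackwell_sup_def by blast
  then show ?thesis
    using more_informative_best_value_le assms(4,5)
    by (fastforce simp: S'_def best_value_relabel_signals[OF f])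
qed

section \<open>Garblings and Blackwell's theorem\<close>

text \<open>Markov kernels from Z to Y are represented by the elements of strategies Z Y.\<close>

definition garble :: "'z set \<Rightarrow> ('s \<Rightarrow> 'z \<Rightarrow> real) \<Rightarrow> ('z \<Rightarrow> 'y \<Rightarrow> real) \<Rightarrow> 's \<Rightarrow> 'y \<Rightarrow> real"
  where "garble Z R K \<theta> y = (\<Sum>z\<in>Z. R \<theta> z * K z y)"

definition kernel_comp :: "'y set \<Rightarrow> ('z \<Rightarrow> 'y \<Rightarrow> real) \<Rightarrow> ('y \<Rightarrow> 'a \<Rightarrow> real) \<Rightarrow> 'z \<Rightarrow> 'a \<Rightarrow> real"
  where "kernel_comp Y K \<sigma> z a = (\<Sum>y\<in>Y. K z y * \<sigma> y a)"

lemma kernel_comp_in_strategies: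
  assumes "K \<in> strategies Z Y" "\<sigma> \<in> strategies Y A"
  shows "kernel_comp Y K \<sigma> \<in> strategies Z A"
  unfolding kernel_comp_def
  by (rule strategy_mixture_in_strategies[where \<sigma>s = "\<lambda>y z. \<sigma> y" and l = K])
    (use assms in \<open>auto simp: strategies_def is_dist_def\<close>)

lemma payoff_garble:
  "payoff Y (garble Z R K) A u \<sigma> = payoff Z R A u (kernel_comp Y K \<sigma>)"
proof -
  have "payoff Y (garble Z R K) A u \<sigma> = (\<Sum>\<theta>\<in>UNIV. \<Sum>z\<in>Z. \<Sum>y\<in>Y. R \<theta> z * (K z y * mixed_util A u \<theta> (\<sigma> y)))"
    unfolding payoff_def garble_def
    by (intro sum.cong refl) (simp add: sum_distrib_right mult.assoc, rule sum.swap)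
  also have "\<dots> = payoff Z R A u (kernel_comp Y K \<sigma>)"
    unfolding payoff_def mixed_util_def kernel_comp_def
    by (intro sum.cong refl) (simp add: sum_distrib_left sum_distrib_right mult_ac, rule sum.swap)
  finally show ?thesis .
qed

lemma payoff_garble_le_best_value:
  assumes "finite A" "K \<in> strategies Z Y" "\<sigma> \<in> strategies Y A"
  shows "payoff Y (garble Z R K) A u \<sigma> \<le> best_value Z R A u"
  unfolding payoff_garble using assms by (intro payoff_le_best_value kernel_comp_in_strategies)

lemma best_value_garble_le:
  assumes "finite A" "A \<noteq> {}" "K \<in> strategies Z Y"
  shows "best_value Y (garble Z R K) A u \<le> best_value Z R A u"
proof -
  obtain s where "\<And>y. s y \<in> A" "payoff Y (garble Z R K) A u (pure_strategy s) = best_value Y (garble Z R K) A u"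
    using payoff_best_response[OF assms(1,2)] by blast
  then show ?thesis
    using payoff_garble_le_best_value[OF assms(1,3) pure_strategy_in_strategies[OF assms(1)]] by metis
qed

definition stochastic_on :: "'i set \<Rightarrow> 'j set \<Rightarrow> ('i \<Rightarrow> 'j \<Rightarrow> real) set"
  where "stochastic_on I J = {K \<in> strategies I J. \<forall>i j. i \<notin> I \<or> j \<notin> J \<longrightarrow> K i j = 0}"

definition mix :: "real \<Rightarrow> ('i \<Rightarrow> 'j \<Rightarrow> real) \<Rightarrow> ('i \<Rightarrow> 'j \<Rightarrow> real) \<Rightarrow> 'i \<Rightarrow> 'j \<Rightarrow> real"
  where "mix t K L i j = (1 - t) * K i j + t * L i j"

lemma closed_strategies: "closed (strategies I J)"
proof -
  have "strategies I J = (\<Inter>i\<in>I. \<Inter>j\<in>J. {K. 0 \<le> K i j}) \<inter> (\<Inter>i\<in>I. {K. (\<Sum>j\<in>J. K i j) = 1})"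
    by (auto simp: strategies_def is_dist_def)
  then show ?thesis
    by (simp only:) (intro closed_Int closed_INT ballI closed_Collect_le closed_Collect_eq continuous_intros)
qed

lemma compact_stochastic_on:
  assumes "finite J"
  shows "compact (stochastic_on I J)"
proof -
  define B where "B i j = (if i \<in> I \<and> j \<in> J then {0..1} else {0::real})" for i j
  have "K i j \<le> 1" if "K \<in> strategies I J" "i \<in> I" "j \<in> J" for K i j
  proof -
    have "K i j \<le> sum (K i) J"
      using that assms by (intro member_le_sum) (auto simp: strategies_def is_dist_def)
    then show ?thesis using that by (simp add: strategies_def is_dist_def)
  qed
  then have "stochastic_on I J = {K. \<forall>i j. K i j \<in> B i j} \<inter> strategies I J"
    by (auto simp: stochastic_on_def B_def strategies_def is_dist_def)
  then show ?thesis
    by (simp only:) (intro compact_Int_closed compact_box2 closed_strategies, simp add: B_def)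
qed

lemma is_dist_convex_comb:
  "is_dist J p \<Longrightarrow> is_dist J q \<Longrightarrow> 0 \<le> t \<Longrightarrow> t \<le> 1 \<Longrightarrow> is_dist J (\<lambda>j. (1 - t) * p j + t * q j)"
  by (simp add: is_dist_def sum.distrib flip: sum_distrib_left)

lemma mix_in_strategies:
  "K \<in> strategies I J \<Longrightarrow> L \<in> strategies I J \<Longrightarrow> 0 \<le> t \<Longrightarrow> t \<le> 1 \<Longrightarrow> mix t K L \<in> strategies I J"
  unfolding strategies_def mix_def by (auto intro: is_dist_convex_comb)

lemma mix_in_stochastic_on:
  "K \<in> stochastic_on I J \<Longrightarrow> L \<in> stochastic_on I J \<Longrightarrow> 0 \<le> t \<Longrightarrow> t \<le> 1 \<Longrightarrow> mix t K L \<in> stochastic_on I J"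
  unfolding stochastic_on_def by (auto intro: mix_in_strategies simp: mix_def)

lemma point_mass_in_stochastic_on:
  assumes "finite J" "j0 \<in> J"
  shows "(\<lambda>i j. if i \<in> I \<and> j = j0 then 1 else 0) \<in> stochastic_on I J"
  using assms by (auto simp: stochastic_on_def strategies_def is_dist_def sum.delta' if_distrib cong: if_cong)

lemma garble_is_dist:
  assumes "is_dist Z (R \<theta>)" "K \<in> strategies Z Y"
  shows "is_dist Y (garble Z R K \<theta>)"
proof -
  have "(\<Sum>y\<in>Y. garble Z R K \<theta> y) = (\<Sum>z\<in>Z. R \<theta> z * sum (K z) Y)"
    unfolding garble_def by (subst sum.swap) (simp add: sum_distrib_left)
  with assms show ?thesis
    by (auto simp: is_dist_def strategies_def garble_def intro!: sum_nonneg)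
qed

lemma garble_mix:
  "garble Z R (mix t K L) \<theta> y = (1 - t) * garble Z R K \<theta> y + t * garble Z R L \<theta> y"
proof -
  have "garble Z R (mix t K L) \<theta> y = (\<Sum>z\<in>Z. (1 - t) * (R \<theta> z * K z y) + t * (R \<theta> z * L z y))"
    unfolding garble_def mix_def by (intro sum.cong refl) (simp add: algebra_simps)
  then show ?thesis by (simp add: garble_def sum.distrib sum_distrib_left)
qed

lemma is_dist_eq_if_le:
  assumes "finite Y" "is_dist Y p" "is_dist Y q" "\<And>y. y \<in> Y \<Longrightarrow> p y \<le> q y" "y \<in> Y"
  shows "p y = q y"
proof -
  have "(\<Sum>y\<in>Y. q y - p y) = 0" using assms(2,3) by (simp add: is_dist_def sum_subtractf)
  then show ?thesis using assms(1,4,5) sum_nonneg_eq_0_iff[of Y "\<lambda>y. q y - p y"] by auto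
qed

lemma sum_mult_le_best_value:
  assumes "finite Y"
  shows "(\<Sum>\<theta>\<in>UNIV. \<Sum>y\<in>Y. u \<theta> y * P \<theta> y) \<le> best_value Y P Y u"
proof -
  have "(\<Sum>\<theta>\<in>UNIV. \<Sum>y\<in>Y. u \<theta> y * P \<theta> y) = (\<Sum>y\<in>Y. signal_payoff P u y y)"
    unfolding signal_payoff_def by (subst sum.swap) (simp add: mult.commute)
  also have "\<dots> \<le> best_value Y P Y u"
    unfolding best_value_def using assms by (intro sum_mono Max_ge) auto
  finally show ?thesis .
qed

lemma sum_mult_garble_eq_payoff:
  "(\<Sum>\<theta>\<in>UNIV. \<Sum>y\<in>Y. u \<theta> y * garble Z R K \<theta> y) = payoff Z R Y u K"
  unfolding payoff_def mixed_util_def garble_def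
  by (intro sum.cong refl) (simp add: sum_distrib_left mult_ac, rule sum.swap)

lemma garble_best_response_dominates:
  assumes mi: "more_informative Z R Y P" and "finite Y" "Y \<noteq> {}"
  obtains K where "K \<in> stochastic_on Z Y"
    "(\<Sum>\<theta>\<in>UNIV. \<Sum>y\<in>Y. u \<theta> y * P \<theta> y) \<le> (\<Sum>\<theta>\<in>UNIV. \<Sum>y\<in>Y. u \<theta> y * garble Z R K \<theta> y)"
proof -
  obtain s where s: "\<And>z. s z \<in> Y" "payoff Z R Y u (pure_strategy s) = best_value Z R Y u"
    using payoff_best_response[OF assms(2,3)] by blast
  define K where "K z y = (if z \<in> Z then pure_strategy s z y else 0)" for z y
  have "K \<in> stochastic_on Z Y"
    using s(1) assms(2)
    by (auto simp: K_def stochastic_on_def pure_strategy_def strategies_def is_dist_def)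
  have "(\<Sum>\<theta>\<in>UNIV. \<Sum>y\<in>Y. u \<theta> y * P \<theta> y) \<le> best_value Y P Y u"
    using assms(2) by (rule sum_mult_le_best_value)
  also have "\<dots> \<le> best_value Z R Y u"
    using more_informative_best_value_le[OF mi assms(2,3)] .
  also have "\<dots> = (\<Sum>\<theta>\<in>UNIV. \<Sum>y\<in>Y. u \<theta> y * garble Z R K \<theta> y)"
    unfolding sum_mult_garble_eq_payoff s(2)[symmetric] by (intro payoff_cong) (auto simp: K_def)
  finally show ?thesis using that \<open>K \<in> stochastic_on Z Y\<close> by blast
qed

text \<open>If no garbling reproduces P,
  the separating weights of the alternative form a decision problem, with the signals of P as
  actions, in which P beats the best response to R.\<close>

theorem more_informative_imp_garbling:
  fixes P :: "'s::finite \<Rightarrow> 'y \<Rightarrow> real" and R :: "'s \<Rightarrow> 'z \<Rightarrow> real"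
  assumes P: "is_experiment Y P" and R: "is_experiment Z R" and mi: "more_informative Z R Y P"
  obtains K where "K \<in> strategies Z Y" "\<And>\<theta> y. y \<in> Y \<Longrightarrow> garble Z R K \<theta> y = P \<theta> y"
proof -
  have "finite Y" using P by (simp add: is_experiment_def)
  obtain y0 where "y0 \<in> Y" using P by (force simp: is_experiment_def is_dist_def)
  define X where "X = stochastic_on Z Y"
  define F where "F p K = P (fst p) (snd p) - garble Z R K (fst p) (snd p)" for p K
  have "(\<exists>K\<in>X. \<forall>p\<in>UNIV \<times> Y. F p K \<le> 0) \<or>
    (\<exists>l. (\<forall>p\<in>UNIV \<times> Y. 0 \<le> l p) \<and> sum l (UNIV \<times> Y) = 1 \<and> (\<forall>K\<in>X. 0 < (\<Sum>p\<in>UNIV \<times> Y. l p * F p K)))"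
  proof (rule affine_functions_alternative[where mix = mix])
    show "compact X" "X \<noteq> {}"
      using compact_stochastic_on[OF \<open>finite Y\<close>] point_mass_in_stochastic_on[OF \<open>finite Y\<close> \<open>y0 \<in> Y\<close>]
      by (auto simp: X_def)
    show "continuous_on X (F p)" for p
      unfolding F_def garble_def by (intro continuous_intros)
    show "F p (mix t K L) = (1 - t) * F p K + t * F p L" for p t K L
      by (simp add: F_def garble_mix algebra_simps)
  qed (use \<open>finite Y\<close> in \<open>auto simp: X_def intro: mix_in_stochastic_on\<close>)
  then show ?thesis
  proof (elim disjE exE conjE bexE)
    fix K assume K: "K \<in> X" and "\<forall>p\<in>UNIV \<times> Y. F p K \<le> 0"
    then have "P \<theta> y \<le> garble Z R K \<theta> y" if "y \<in> Y" for \<theta> y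
      using that by (force simp: F_def)
    moreover have "K \<in> strategies Z Y" using K by (simp add: X_def stochastic_on_def)
    moreover have "is_dist Y (garble Z R K \<theta>)" "is_dist Y (P \<theta>)" for \<theta>
      using P R garble_is_dist[of Z R \<theta> K Y] \<open>K \<in> strategies Z Y\<close> by (auto simp: is_experiment_def)
    ultimately show ?thesis
      using that is_dist_eq_if_le[OF \<open>finite Y\<close>] by metis
  next
    fix l assume pos: "\<forall>K\<in>X. 0 < (\<Sum>p\<in>UNIV \<times> Y. l p * F p K)"
    obtain K where "K \<in> X"
      and "(\<Sum>\<theta>\<in>UNIV. \<Sum>y\<in>Y. l (\<theta>, y) * P \<theta> y) \<le> (\<Sum>\<theta>\<in>UNIV. \<Sum>y\<in>Y. l (\<theta>, y) * garble Z R K \<theta> y)"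
      using garble_best_response_dominates[where u = "\<lambda>\<theta> y. l (\<theta>, y)", OF mi \<open>finite Y\<close>] \<open>y0 \<in> Y\<close>
      unfolding X_def by blast
    moreover have "(\<Sum>p\<in>UNIV \<times> Y. l p * F p K)
        = (\<Sum>\<theta>\<in>UNIV. \<Sum>y\<in>Y. l (\<theta>, y) * P \<theta> y) - (\<Sum>\<theta>\<in>UNIV. \<Sum>y\<in>Y. l (\<theta>, y) * garble Z R K \<theta> y)"
      by (simp add: sum.cartesian_product F_def right_diff_distrib sum_subtractf split_def)
    moreover have "0 < (\<Sum>p\<in>UNIV \<times> Y. l p * F p K)" using pos \<open>K \<in> X\<close> by blast
    ultimately show ?thesis by linarith
  qed
qed

section \<open>Minimax over pure strategies\<close>

lemma payoff_mix:
  "payoff Y (mix t Q Q') A u \<sigma> = (1 - t) * payoff Y Q A u \<sigma> + t * payoff Y Q' A u \<sigma>"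
proof -
  have "payoff Y (mix t Q Q') A u \<sigma> = (\<Sum>\<theta>\<in>UNIV. \<Sum>y\<in>Y.
      (1 - t) * (Q \<theta> y * mixed_util A u \<theta> (\<sigma> y)) + t * (Q' \<theta> y * mixed_util A u \<theta> (\<sigma> y)))"
    unfolding payoff_def mix_def by (intro sum.cong refl) (simp add: algebra_simps)
  then show ?thesis by (simp add: payoff_def sum.distrib sum_distrib_left)
qed

lemma uniformly_good_strategy:
  fixes X :: "('s::finite \<Rightarrow> 'y \<Rightarrow> real) set"
  assumes "finite Y" "finite A" "A \<noteq> {}" "compact X" "X \<noteq> {}"
    and mix_in: "\<And>t Q Q'. 0 \<le> t \<Longrightarrow> t \<le> 1 \<Longrightarrow> Q \<in> X \<Longrightarrow> Q' \<in> X \<Longrightarrow> mix t Q Q' \<in> X"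
    and good: "\<And>Q. Q \<in> X \<Longrightarrow> L \<le> best_value Y Q A u" and "0 < \<epsilon>"
  obtains \<sigma> where "\<sigma> \<in> strategies Y A" "\<And>Q. Q \<in> X \<Longrightarrow> L - \<epsilon> < payoff Y Q A u \<sigma>"
proof -
  define S where "S = PiE Y (\<lambda>_. A)"
  define F where "F s Q = payoff Y Q A u (pure_strategy s) - (L - \<epsilon>)" for s Q
  have "(\<exists>Q\<in>X. \<forall>s\<in>S. F s Q \<le> 0) \<or>
    (\<exists>l. (\<forall>s\<in>S. 0 \<le> l s) \<and> sum l S = 1 \<and> (\<forall>Q\<in>X. 0 < (\<Sum>s\<in>S. l s * F s Q)))"
  proof (rule affine_functions_alternative[where mix = mix])
    show "finite S" unfolding S_def using assms(1,2) by (rule finite_PiE)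
    show "continuous_on X (F s)" for s
      unfolding F_def payoff_def by (intro continuous_intros)
  qed (use assms(4,5) in \<open>auto simp: F_def payoff_mix algebra_simps intro: mix_in\<close>)
  then show ?thesis
  proof (elim disjE exE conjE bexE)
    fix Q assume Q: "Q \<in> X" and bad: "\<forall>s\<in>S. F s Q \<le> 0"
    obtain s where s: "\<And>y. s y \<in> A" "payoff Y Q A u (pure_strategy s) = best_value Y Q A u"
      using payoff_best_response[OF assms(2,3)] by blast
    have "payoff Y Q A u (pure_strategy (restrict s Y)) = payoff Y Q A u (pure_strategy s)"
      by (intro payoff_cong) (auto simp: pure_strategy_def)
    moreover have "restrict s Y \<in> S" using s(1) by (simp add: S_def)
    ultimately show ?thesis using bad s(2) good[OF Q] \<open>0 < \<epsilon>\<close> by (fastforce simp: F_def)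
  next
    fix l assume l: "\<forall>s\<in>S. 0 \<le> l s" "sum l S = 1" and pos: "\<forall>Q\<in>X. 0 < (\<Sum>s\<in>S. l s * F s Q)"
    define \<sigma> where "\<sigma> = (\<lambda>y a. \<Sum>s\<in>S. l s * pure_strategy s y a)"
    have "\<sigma> \<in> strategies Y A"
      unfolding \<sigma>_def using assms(2) l
      by (intro strategy_mixture_in_strategies pure_strategy_in_strategies) (auto simp: S_def)
    moreover have "L - \<epsilon> < payoff Y Q A u \<sigma>" if "Q \<in> X" for Q
    proof -
      have "(\<Sum>s\<in>S. l s * F s Q) = payoff Y Q A u \<sigma> - (L - \<epsilon>)"
        unfolding F_def \<sigma>_def payoff_strategy_mixture
        by (simp add: right_diff_distrib sum_subtractf l(2) flip: sum_distrib_right)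
      then show ?thesis using pos that by fastforce
    qed
    ultimately show ?thesis using that by blast
  qed
qed

section \<open>Couplings\<close>

lemma PiE_fiber:
  assumes "j < m" "y \<in> Y j"
  shows "{ys \<in> PiE {..<m} Y. ys j = y} = PiE {..<m} (Y(j := {y}))"
  using assms by (auto simp: PiE_iff split: if_splits) (metis extensional_arb lessThan_iff)

lemma coupling_marginal_eq_garble:
  assumes "Q \<in> couplings m Y P" "j < m" "y \<in> Y j" "finite (PiE {..<m} Y)"
  shows "garble (PiE {..<m} Y) Q (pure_strategy (\<lambda>ys. ys j)) \<theta> y = P j \<theta> y"
proof -
  have "garble (PiE {..<m} Y) Q (pure_strategy (\<lambda>ys. ys j)) \<theta> y = (\<Sum>ys\<in>{ys \<in> PiE {..<m} Y. ys j = y}. Q \<theta> ys)"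
  proof -
    have "Q \<theta> ys * pure_strategy (\<lambda>ys. ys j) ys y = (if ys j = y then Q \<theta> ys else 0)" for ys
      by (simp add: pure_strategy_def)
    then show ?thesis unfolding garble_def using assms(4) by (simp add: sum.inter_filter)
  qed
  then show ?thesis using assms(1-3) by (simp add: couplings_def)
qed

lemma coupling_is_experiment:
  "Q \<in> couplings m Y P \<Longrightarrow> \<forall>j<m. finite (Y j) \<Longrightarrow> is_experiment (PiE {..<m} Y) Q"
  by (auto simp: couplings_def is_experiment_def intro: finite_PiE)

lemma best_value_le_coupling:
  assumes "Q \<in> couplings m Y P" "\<forall>j<m. finite (Y j)" "j < m" "finite A" "A \<noteq> {}"
  shows "best_value (Y j) (P j) A u \<le> best_value (PiE {..<m} Y) Q A u"
proof -
  have "finite (PiE {..<m} Y)" using assms(2) by (intro finite_PiE) auto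
  then have "best_value (Y j) (P j) A u = best_value (Y j) (garble (PiE {..<m} Y) Q (pure_strategy (\<lambda>ys. ys j))) A u"
    unfolding best_value_def signal_payoff_def using assms(1,3) by (simp add: coupling_marginal_eq_garble)
  also have "\<dots> \<le> best_value (PiE {..<m} Y) Q A u"
  proof (rule best_value_garble_le[OF assms(4,5)])
    show "pure_strategy (\<lambda>ys. ys j) \<in> strategies (PiE {..<m} Y) (Y j)"
      using assms(2,3) by (intro pure_strategy_in_strategies) (auto simp: PiE_iff)
  qed
  finally show ?thesis .
qed

lemma blackwell_sup_le_coupling:
  assumes "blackwell_sup m Y P Z R" "Q \<in> couplings m Y P" "\<forall>j<m. finite (Y j)" "finite A" "A \<noteq> {}"
  shows "best_value Z R A u \<le> best_value (PiE {..<m} Y) Q A u"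
proof (rule blackwell_sup_best_value_le[OF assms(1)])
  show "is_experiment (PiE {..<m} Y) Q" using assms(2,3) by (rule coupling_is_experiment)
  show "best_value (Y j) (P j) B v \<le> best_value (PiE {..<m} Y) Q B v"
    if "j < m" "finite B" "B \<noteq> {}" for j and B :: "nat set" and v
    using best_value_le_coupling[OF assms(2,3) that] .
qed (use assms in auto)

definition prod_kernel :: "nat \<Rightarrow> (nat \<Rightarrow> 'z \<Rightarrow> 'y \<Rightarrow> real) \<Rightarrow> 'z \<Rightarrow> (nat \<Rightarrow> 'y) \<Rightarrow> real"
  where "prod_kernel m K z ys = (\<Prod>j<m. K j z (ys j))"

lemma sum_prod_kernel:
  assumes "\<And>j. j < m \<Longrightarrow> finite (Y j)"
  shows "(\<Sum>ys\<in>PiE {..<m} Y. prod_kernel m K z ys) = (\<Prod>j<m. sum (K j z) (Y j))"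
  unfolding prod_kernel_def using prod_sum_PiE[of "{..<m}" Y "\<lambda>j. K j z"] assms by simp

lemma prod_kernel_in_strategies:
  assumes "\<And>j. j < m \<Longrightarrow> finite (Y j)" "\<And>j. j < m \<Longrightarrow> K j \<in> strategies Z (Y j)"
  shows "prod_kernel m K \<in> strategies Z (PiE {..<m} Y)"
  unfolding strategies_def is_dist_def
proof (intro CollectI ballI conjI)
  fix z assume "z \<in> Z"
  with assms(2) have K: "is_dist (Y j) (K j z)" if "j < m" for j
    using that by (simp add: strategies_def)
  show "0 \<le> prod_kernel m K z ys" if "ys \<in> PiE {..<m} Y" for ys
    unfolding prod_kernel_def using K that by (intro prod_nonneg) (auto simp: is_dist_def PiE_iff)
  show "sum (prod_kernel m K z) (PiE {..<m} Y) = 1"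
    using K by (simp add: sum_prod_kernel[OF assms(1)] is_dist_def)
qed

lemma sum_prod_kernel_fiber:
  assumes "\<And>j. j < m \<Longrightarrow> finite (Y j)" "\<And>j. j < m \<Longrightarrow> K j \<in> strategies Z (Y j)"
    and "z \<in> Z" "j < m" "y \<in> Y j"
  shows "(\<Sum>ys\<in>{ys \<in> PiE {..<m} Y. ys j = y}. prod_kernel m K z ys) = K j z y"
proof -
  have "(\<Sum>ys\<in>{ys \<in> PiE {..<m} Y. ys j = y}. prod_kernel m K z ys) = (\<Prod>i<m. sum (K i z) ((Y(j := {y})) i))"
    unfolding PiE_fiber[of j m y Y, OF assms(4,5)] using assms(1) by (intro sum_prod_kernel) simp
  also have "\<dots> = (\<Prod>i<m. if i = j then K j z y else 1)"
    using assms(2,3) by (intro prod.cong refl) (auto simp: strategies_def is_dist_def)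
  also have "\<dots> = K j z y" using assms(4) by (simp add: prod.delta)
  finally show ?thesis .
qed

text \<open>The coupling under which the signals of the P j are conditionally independent given
  the signal of R.\<close>

lemma garble_prod_kernel_in_couplings:
  assumes R: "\<And>\<theta>. is_dist Z (R \<theta>)"
    and fin: "\<And>j. j < m \<Longrightarrow> finite (Y j)" and K: "\<And>j. j < m \<Longrightarrow> K j \<in> strategies Z (Y j)"
    and garbling: "\<And>j \<theta> y. j < m \<Longrightarrow> y \<in> Y j \<Longrightarrow> garble Z R (K j) \<theta> y = P j \<theta> y"
  shows "garble Z R (prod_kernel m K) \<in> couplings m Y P"
  unfolding couplings_def
proof (intro CollectI conjI allI impI ballI)
  show "is_dist (PiE {..<m} Y) (garble Z R (prod_kernel m K) \<theta>)" for \<theta>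
    using R fin K by (intro garble_is_dist prod_kernel_in_strategies)
  fix \<theta> j y assume "j < m" "y \<in> Y j"
  have "(\<Sum>ys\<in>{ys \<in> PiE {..<m} Y. ys j = y}. garble Z R (prod_kernel m K) \<theta> ys)
      = (\<Sum>z\<in>Z. R \<theta> z * (\<Sum>ys\<in>{ys \<in> PiE {..<m} Y. ys j = y}. prod_kernel m K z ys))"
    unfolding garble_def by (subst sum.swap) (simp add: sum_distrib_left)
  also have "\<dots> = garble Z R (K j) \<theta> y"
    unfolding garble_def using sum_prod_kernel_fiber[of m Y K Z, OF fin K _ \<open>j < m\<close> \<open>y \<in> Y j\<close>] by simp
  finally show "(\<Sum>ys\<in>{ys \<in> PiE {..<m} Y. ys j = y}. garble Z R (prod_kernel m K) \<theta> ys) = P j \<theta> y"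
    using garbling[OF \<open>j < m\<close> \<open>y \<in> Y j\<close>] by simp
qed

lemma closed_couplings: "closed (couplings m Y P)"
proof -
  have "couplings m Y P = strategies UNIV (PiE {..<m} Y) \<inter>
      (\<Inter>\<theta>. \<Inter>j\<in>{..<m}. \<Inter>y\<in>Y j. {Q. (\<Sum>ys\<in>{ys \<in> PiE {..<m} Y. ys j = y}. Q \<theta> ys) = P j \<theta> y})"
    unfolding couplings_def strategies_def by blast
  then show ?thesis
    by (simp only:) (intro closed_Int closed_strategies closed_INT ballI closed_Collect_eq continuous_intros)
qed

lemma mix_in_couplings:
  assumes "Q \<in> couplings m Y P" "Q' \<in> couplings m Y P" "0 \<le> t" "t \<le> 1"
  shows "mix t Q Q' \<in> couplings m Y P"
proof -
  have "mix t Q Q' \<in> strategies UNIV (PiE {..<m} Y)"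
    using assms by (intro mix_in_strategies) (auto simp: couplings_def strategies_def)
  moreover have "(\<Sum>ys\<in>{ys \<in> PiE {..<m} Y. ys j = y}. mix t Q Q' \<theta> ys) = P j \<theta> y"
    if "j < m" "y \<in> Y j" for \<theta> j y
  proof -
    have "(\<Sum>ys\<in>{ys \<in> PiE {..<m} Y. ys j = y}. mix t Q Q' \<theta> ys)
        = (1 - t) * (\<Sum>ys\<in>{ys \<in> PiE {..<m} Y. ys j = y}. Q \<theta> ys)
          + t * (\<Sum>ys\<in>{ys \<in> PiE {..<m} Y. ys j = y}. Q' \<theta> ys)"
      by (simp add: mix_def sum.distrib sum_distrib_left)
    also have "\<dots> = P j \<theta> y" using assms(1,2) that by (simp add: couplings_def algebra_simps)
    finally show ?thesis .
  qed
  ultimately show ?thesis by (simp add: couplings_def strategies_def)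
qed

lemma restricted_coupling:
  assumes "Q \<in> couplings m Y P"
  defines "Q' \<equiv> \<lambda>\<theta> ys. if ys \<in> PiE {..<m} Y then Q \<theta> ys else 0"
  shows "Q' \<in> couplings m Y P \<inter> stochastic_on UNIV (PiE {..<m} Y)"
    and "payoff (PiE {..<m} Y) Q' A u \<sigma> = payoff (PiE {..<m} Y) Q A u \<sigma>"
proof -
  have "(\<Sum>ys\<in>B. Q' \<theta> ys) = (\<Sum>ys\<in>B. Q \<theta> ys)" if "B \<subseteq> PiE {..<m} Y" for B \<theta>
    using that by (intro sum.cong) (auto simp: Q'_def)
  with assms(1) show "Q' \<in> couplings m Y P \<inter> stochastic_on UNIV (PiE {..<m} Y)"
    by (auto simp: couplings_def stochastic_on_def strategies_def is_dist_def Q'_def)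
  show "payoff (PiE {..<m} Y) Q' A u \<sigma> = payoff (PiE {..<m} Y) Q A u \<sigma>"
    by (intro payoff_cong) (simp_all add: Q'_def)
qed

lemma INF_payoff_couplings_le:
  assumes "Q0 \<in> couplings m Y P" "finite A" "\<sigma> \<in> strategies (PiE {..<m} Y) A"
  shows "(INF Q\<in>couplings m Y P. payoff (PiE {..<m} Y) Q A u \<sigma>) \<le> payoff (PiE {..<m} Y) Q0 A u \<sigma>"
proof (rule cINF_lower[OF bdd_belowI assms(1)])
  fix x assume "x \<in> (\<lambda>Q. payoff (PiE {..<m} Y) Q A u \<sigma>) ` couplings m Y P"
  then obtain Q where "Q \<in> couplings m Y P" "x = payoff (PiE {..<m} Y) Q A u \<sigma>" by blast
  then show "- (\<Sum>\<theta>\<in>UNIV. \<Sum>a\<in>A. \<bar>u \<theta> a\<bar>) \<le> x"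
    using payoff_ge_neg_sum_abs[OF assms(2,3), of Q] by (simp add: couplings_def)
qed

lemma valueM_le_best_value:
  assumes "finite A" "A \<noteq> {}"
    and "W \<in> strategies Z (PiE {..<m} Y)" "garble Z R W \<in> couplings m Y P"
  shows "valueM m Y P A u \<le> best_value Z R A u"
  unfolding valueM_def
proof (rule cSUP_least)
  obtain a where "a \<in> A" using assms(2) by blast
  then have "pure_strategy (\<lambda>_. a) \<in> strategies (PiE {..<m} Y) A"
    using assms(1) by (intro pure_strategy_in_strategies)
  then show "strategies (PiE {..<m} Y) A \<noteq> {}" by blast
  fix \<sigma> assume \<sigma>: "\<sigma> \<in> strategies (PiE {..<m} Y) A"
  show "(INF Q\<in>couplings m Y P. payoff (PiE {..<m} Y) Q A u \<sigma>) \<le> best_value Z R A u"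
    using INF_payoff_couplings_le[OF assms(4,1) \<sigma>] payoff_garble_le_best_value[OF assms(1,3) \<sigma>]
    by (rule order_trans)
qed

lemma best_value_le_valueM:
  assumes sup: "blackwell_sup m Y P Z R" and fin: "\<forall>j<m. finite (Y j)"
    and "finite A" "A \<noteq> {}" and Q0: "Q0 \<in> couplings m Y P"
  shows "best_value Z R A u \<le> valueM m Y P A u"
proof (rule field_le_epsilon)
  fix \<epsilon> :: real assume "0 < \<epsilon>"
  define J where "J = PiE {..<m} Y"
  define X where "X = couplings m Y P \<inter> stochastic_on UNIV J"
  have "finite J" unfolding J_def using fin by (intro finite_PiE) auto
  obtain \<sigma> where \<sigma>: "\<sigma> \<in> strategies J A"
    and good: "\<And>Q. Q \<in> X \<Longrightarrow> best_value Z R A u - \<epsilon> < payoff J Q A u \<sigma>"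
  proof (rule uniformly_good_strategy[OF \<open>finite J\<close> assms(3,4) _ _ _ _ \<open>0 < \<epsilon>\<close>])
    have "compact (stochastic_on UNIV J \<inter> couplings m Y P)"
      using compact_stochastic_on[OF \<open>finite J\<close>] closed_couplings by (rule compact_Int_closed)
    then show "compact X" by (simp add: X_def Int_commute)
    show "X \<noteq> {}" using restricted_coupling(1)[OF Q0] unfolding X_def J_def by blast
    show "mix t Q Q' \<in> X" if "0 \<le> t" "t \<le> 1" "Q \<in> X" "Q' \<in> X" for t Q Q'
      using that mix_in_couplings mix_in_stochastic_on unfolding X_def by blast
    show "best_value Z R A u \<le> best_value J Q A u" if "Q \<in> X" for Q
      using blackwell_sup_le_coupling[OF sup _ fin assms(3,4)] that unfolding X_def J_def by blast
  qed blast
  have "best_value Z R A u - \<epsilon> \<le> payoff J Q A u \<sigma>" if "Q \<in> couplings m Y P" for Q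
    using good[OF restricted_coupling(1)[OF that, folded J_def, folded X_def]]
      restricted_coupling(2)[OF that, of A u \<sigma>, folded J_def] by linarith
  then have "best_value Z R A u - \<epsilon> \<le> (INF Q\<in>couplings m Y P. payoff J Q A u \<sigma>)"
    using Q0 by (intro cINF_greatest) auto
  also have "\<dots> \<le> valueM m Y P A u"
    unfolding valueM_def J_def[symmetric]
  proof (rule cSUP_upper[OF \<sigma>], rule bdd_aboveI)
    fix x assume "x \<in> (\<lambda>\<sigma>. INF Q\<in>couplings m Y P. payoff J Q A u \<sigma>) ` strategies J A"
    then obtain \<sigma>' where \<sigma>': "\<sigma>' \<in> strategies J A"
      and x: "x = (INF Q\<in>couplings m Y P. payoff J Q A u \<sigma>')" by blast
    have "x \<le> payoff J Q0 A u \<sigma>'"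
      unfolding x J_def using Q0 assms(3) \<sigma>' J_def by (intro INF_payoff_couplings_le) auto
    also have "\<dots> \<le> best_value J Q0 A u" by (rule payoff_le_best_value[OF assms(3) \<sigma>'])
    finally show "x \<le> best_value J Q0 A u" .
  qed
  finally show "best_value Z R A u \<le> valueM m Y P A u + \<epsilon>" by linarith
qed

theorem proposition1:
  fixes A :: "'a set" and u :: "'s::finite \<Rightarrow> 'a \<Rightarrow> real"
    and m :: nat and Y :: "nat \<Rightarrow> 'y set" and P :: "nat \<Rightarrow> 's \<Rightarrow> 'y \<Rightarrow> real"
    and Z :: "'z set" and R :: "'s \<Rightarrow> 'z \<Rightarrow> real"
  assumes "card (UNIV :: 's set) = 2"
    and "finite A" and "A \<noteq> {}"
    and "0 < m"
    and "\<forall>j<m. is_experiment (Y j) (P j)"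
    and "blackwell_sup m Y P Z R"
  shows "valueM m Y P A u = value1 Z R A u"
proof -
  \<comment> \<open>Two states only guarantee that a Blackwell supremum exists.\<close>
  have R: "is_experiment Z R" and mi: "\<And>j. j < m \<Longrightarrow> more_informative Z R (Y j) (P j)"
    using assms(6) by (simp_all add: blackwell_sup_def)
  have fin: "\<forall>j<m. finite (Y j)" using assms(5) by (simp add: is_experiment_def)
  have "\<exists>K. K \<in> strategies Z (Y j) \<and> (\<forall>\<theta>. \<forall>y\<in>Y j. garble Z R K \<theta> y = P j \<theta> y)" if "j < m" for j
    using more_informative_imp_garbling[OF _ R mi[OF that]] assms(5) that by metis
  then obtain K where K: "\<And>j. j < m \<Longrightarrow> K j \<in> strategies Z (Y j)"
    and garbling: "\<And>j \<theta> y. j < m \<Longrightarrow> y \<in> Y j \<Longrightarrow> garble Z R (K j) \<theta> y = P j \<theta> y"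
    by metis
  have "garble Z R (prod_kernel m K) \<in> couplings m Y P"
    using R fin K garbling by (intro garble_prod_kernel_in_couplings) (auto simp: is_experiment_def)
  moreover have "prod_kernel m K \<in> strategies Z (PiE {..<m} Y)"
    using fin K by (intro prod_kernel_in_strategies) auto
  ultimately have "valueM m Y P A u \<le> best_value Z R A u" "best_value Z R A u \<le> valueM m Y P A u"
    using valueM_le_best_value best_value_le_valueM[OF assms(6) fin] assms(2,3) by blast+
  then show ?thesis using value1_eq_best_value[OF assms(2,3), of Z R u] by linarith
qed

end
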